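(* Let $\mathcal{G}$ be a strongly connected digraph with $N$ nodes and consider the distributed quantized weight-balancing algorithm described in the context, with step-size $\gamma(k)=2^{-n}$ for $2^n-1\le k\le 2^{n+1}-2$. If at some iteration $k$ one has $\Vert\boldsymbol{\epsilon}(k)\Vert_1\ge 2N(N-1)\gamma(k)$, then the decreasing event $\mathcal{D}_t$ occurs for some integer $t$ with $k\le t\le k+N^{2N}$.
   Context: $\mathcal{G}=(\mathcal{V},\mathcal{E})$, $\mathcal{V}=\{1,\dots,N\}$, no self-loops; $\mathcal{N}_i^-=\{j:(j,i)\in\mathcal{E}\}$, $\mathcal{N}_i^+=\{j:(i,j)\in\mathcal{E}\}$, $d_i^+=|\mathcal{N}_i^+|$. Algorithm: $a_{ij}(0)=1$ if $j\in\mathcal{N}_i^-$ and $0$ otherwise; $b_i(k)=\sum_{j\in\mathcal{N}_i^-}a_{ij}(k)-\sum_{j\in\mathcal{N}_i^+}a_{ji}(k)$; $n_i(k)=1$ if $b_i(k)\ge d_i^+\gamma(k)$, else $0$; $a_{ij}(k+1)=a_{ij}(k)+n_j(k)\gamma(k)$ for $j\in\mathcal{N}_i^-$. $\boldsymbol{\epsilon}(k)=(|b_i(k)|)_{i=1}^N$. The decreasing event $\mathcal{D}_k$ is: there exist $i\in\mathcal{V}$ and $j\in\mathcal{N}_i^+$ with $n_i(k)>0$ and $b_j(k)<0$. *)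

theory Defs
  imports Complex_Main
begin

text \<open>Nodes are 1..N; the digraph is given by its edge set E (pairs (j,i) meaning j -> i).
  Weights are stored as a function a i j (weight of edge (j,i), i.e. a_{ij}).\<close>

definition nodes :: "nat \<Rightarrow> nat set" where
  "nodes N = {1..N}"

definition in_nbrs :: "nat \<Rightarrow> (nat \<times> nat) set \<Rightarrow> nat \<Rightarrow> nat set" where
  "in_nbrs N E i = {j \<in> nodes N. (j, i) \<in> E}"

definition out_nbrs :: "nat \<Rightarrow> (nat \<times> nat) set \<Rightarrow> nat \<Rightarrow> nat set" where
  "out_nbrs N E i = {j \<in> nodes N. (i, j) \<in> E}"

definition out_deg :: "nat \<Rightarrow> (nat \<times> nat) set \<Rightarrow> nat \<Rightarrow> nat" where
  "out_deg N E i = card (out_nbrs N E i)"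

definition strongly_connected :: "nat \<Rightarrow> (nat \<times> nat) set \<Rightarrow> bool" where
  "strongly_connected N E \<longleftrightarrow>
     E \<subseteq> nodes N \<times> nodes N \<and> (\<forall>i \<in> nodes N. (i, i) \<notin> E) \<and>
     (\<forall>i \<in> nodes N. \<forall>j \<in> nodes N. (i, j) \<in> E\<^sup>*)"

definition stepsize :: "nat \<Rightarrow> real" where
  "stepsize k = (1/2) ^ (THE n::nat. 2^n - 1 \<le> k \<and> k \<le> 2^(n+1) - 2)"

definition imbalance :: "nat \<Rightarrow> (nat \<times> nat) set \<Rightarrow> (nat \<Rightarrow> nat \<Rightarrow> real) \<Rightarrow> nat \<Rightarrow> real" where
  "imbalance N E a i = (\<Sum>j \<in> in_nbrs N E i. a i j) - (\<Sum>j \<in> out_nbrs N E i. a j i)"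

definition flag :: "nat \<Rightarrow> (nat \<times> nat) set \<Rightarrow> (nat \<Rightarrow> nat \<Rightarrow> real) \<Rightarrow> real \<Rightarrow> nat \<Rightarrow> real" where
  "flag N E a g i = (if imbalance N E a i \<ge> real (out_deg N E i) * g then 1 else 0)"

primrec weights :: "nat \<Rightarrow> (nat \<times> nat) set \<Rightarrow> nat \<Rightarrow> (nat \<Rightarrow> nat \<Rightarrow> real)" where
  "weights N E 0 = (\<lambda>i j. if j \<in> in_nbrs N E i then 1 else 0)"
| "weights N E (Suc k) = (let a = weights N E k in
     (\<lambda>i j. if j \<in> in_nbrs N E i then a i j + flag N E a (stepsize k) j * stepsize k else a i j))"

definition b :: "nat \<Rightarrow> (nat \<times> nat) set \<Rightarrow> nat \<Rightarrow> nat \<Rightarrow> real" where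
  "b N E k i = imbalance N E (weights N E k) i"

definition nflag :: "nat \<Rightarrow> (nat \<times> nat) set \<Rightarrow> nat \<Rightarrow> nat \<Rightarrow> real" where
  "nflag N E k i = flag N E (weights N E k) (stepsize k) i"

definition eps_norm1 :: "nat \<Rightarrow> (nat \<times> nat) set \<Rightarrow> nat \<Rightarrow> real" where
  "eps_norm1 N E k = (\<Sum>i \<in> nodes N. \<bar>b N E k i\<bar>)"

definition decreasing_event :: "nat \<Rightarrow> (nat \<times> nat) set \<Rightarrow> nat \<Rightarrow> bool" where
  "decreasing_event N E k \<longleftrightarrow>
     (\<exists>i \<in> nodes N. \<exists>j \<in> out_nbrs N E i. nflag N E k i > 0 \<and> b N E k j < 0)"

end

theory Submission
  imports Defs "HOL-Library.Discrete_Functions"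
begin

text \<open>Suppose no decreasing event occurs in \<open>[k, k + N^(2N)]\<close>. Then negative imbalances are
  frozen and nonnegative ones stay nonnegative, so \<open>\<parallel>\<epsilon>\<parallel>\<^sub>1\<close> is constant; as it is large compared
  with the step size, some node fires at every step. Inside the window there is a stretch of
  \<open>N^N\<close> steps with constant step size. There, if \<open>j\<close> does not fire then \<open>b\<^sub>j < d\<^sub>j\<^sup>+ \<gamma>\<close>, which
  caps the number of firings of each in-neighbour \<open>i\<close> of a nonnegative node \<open>j\<close> by
  \<open>(N - 1)(f\<^sub>j + 1)\<close>. Negative nodes and their in-neighbours never fire, and by strong
  connectivity every node reaches a negative node in at most \<open>N - 1\<close> steps, so every node
  fires fewer than \<open>N^(N-1)\<close> times: fewer than \<open>N^N\<close> firings in total, yet at least one per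
  step.\<close>

lemma stepsize_eq_floor_log: "stepsize k = (1/2) ^ floor_log (Suc k)"
proof -
  have "(THE n::nat. 2^n - 1 \<le> k \<and> k \<le> 2^(n+1) - 2) = floor_log (Suc k)"
  proof (rule the_equality)
    show "2 ^ floor_log (Suc k) - 1 \<le> k \<and> k \<le> 2 ^ (floor_log (Suc k) + 1) - 2"
      using floor_log_exp2_le[of "Suc k"] floor_log_exp2_gt[of "Suc k"] by auto
  next
    fix n :: nat
    assume n: "2^n - 1 \<le> k \<and> k \<le> 2^(n+1) - 2"
    have "(1::nat) \<le> 2^n" "(2::nat) \<le> 2^(n+1)" by simp_all
    with n have "2^n \<le> Suc k" "Suc k < 2^(n+1)" by linarith+
    then show "n = floor_log (Suc k)" by (intro floor_log_eqI[symmetric]) auto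
  qed
  then show ?thesis unfolding stepsize_def by simp
qed

lemma stepsize_pos: "0 < stepsize k"
  by (simp add: stepsize_eq_floor_log)

lemma stepsize_antimono: "k \<le> k' \<Longrightarrow> stepsize k' \<le> stepsize k"
  unfolding stepsize_eq_floor_log by (rule power_decreasing) (auto intro: floor_log_le_iff)

lemma stepsize_constant_subinterval:
  assumes "3 * M \<le> W"
  obtains a where "k \<le> a" "a + M \<le> k + W"
    "\<And>s. a \<le> s \<Longrightarrow> s < a + M \<Longrightarrow> stepsize s = stepsize a"
proof (cases "M = 0")
  case True
  then show thesis using that[of k] by simp
next
  case False
  have "\<exists>a. k \<le> a \<and> a + M \<le> k + W \<and> floor_log (Suc a) = floor_log (a + M)"
  proof -
    define n where "n = floor_log (k + W)"
    have n: "2 ^ n \<le> k + W" "k + W < 2 * 2 ^ n"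
      using False assms floor_log_exp2_le[of "k + W"] floor_log_exp2_gt[of "k + W"]
      by (auto simp: n_def)
    \<comment> \<open>The step size is constant on the blocks \<open>[2^m - 1, 2^(m+1) - 1)\<close>. Either the block of
      \<open>k + W - 1\<close> already starts by \<open>k\<close>, or it has \<open>M\<close> points in the window, or else the
      block before it, of length \<open>2^(n-1) > M\<close>, ends inside the window.\<close>
    consider "2 ^ n \<le> Suc k" | "Suc k < 2 ^ n" "2 ^ n - 1 + M \<le> k + W"
      | "k + W < 2 ^ n - 1 + M" by linarith
    then show ?thesis
    proof cases
      case 1
      then show ?thesis using n False assms
        by (intro exI[of _ k]) (auto simp: floor_log_eqI[of _ n])
    next
      case 2
      then show ?thesis using n False
        by (intro exI[of _ "2 ^ n - 1"]) (auto simp: floor_log_eqI[of _ n])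
    next
      case 3
      then have "2 * M < 2 ^ n" using assms by linarith
      then have "n \<noteq> 0" using False by (cases n) auto
      then have "(2::nat) ^ n = 2 * 2 ^ (n - 1)" "M < 2 ^ (n - 1)"
        using \<open>2 * M < 2 ^ n\<close> by (cases n; simp)+
      then have "floor_log (Suc (2 ^ n - 1 - M)) = n - 1" "floor_log (2 ^ n - 1 - M + M) = n - 1"
        using False by (auto intro!: floor_log_eqI)
      then show ?thesis using 3 n assms
        by (intro exI[of _ "2 ^ n - 1 - M"]) auto
    qed
  qed
  then obtain a where a: "k \<le> a" "a + M \<le> k + W" "floor_log (Suc a) = floor_log (a + M)"
    by blast
  have "stepsize s = stepsize a" if "a \<le> s" "s < a + M" for s
    using a(3) floor_log_le_iff[of "Suc a" "Suc s"] floor_log_le_iff[of "Suc s" "a + M"] that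
    by (simp add: stepsize_eq_floor_log)
  with a show thesis using that by blast
qed

lemma finite_nodes [simp]: "finite (nodes N)"
  and card_nodes [simp]: "card (nodes N) = N"
  by (simp_all add: nodes_def)

lemma sum_imbalance_eq_0: "(\<Sum>i\<in>nodes N. imbalance N E a i) = 0"
proof -
  have "(\<Sum>i\<in>nodes N. \<Sum>j\<in>out_nbrs N E i. a j i)
      = (\<Sum>i\<in>nodes N. \<Sum>j\<in>nodes N. if (i, j) \<in> E then a j i else 0)"
    unfolding out_nbrs_def by (simp add: sum.inter_filter)
  also have "\<dots> = (\<Sum>j\<in>nodes N. \<Sum>i\<in>nodes N. if (i, j) \<in> E then a j i else 0)"
    by (rule sum.swap)
  also have "\<dots> = (\<Sum>j\<in>nodes N. \<Sum>i\<in>in_nbrs N E j. a j i)"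
    unfolding in_nbrs_def by (simp add: sum.inter_filter)
  finally show ?thesis unfolding imbalance_def sum_subtractf by simp
qed

lemma sum_b_eq_0: "(\<Sum>i\<in>nodes N. b N E t i) = 0"
  unfolding b_def by (rule sum_imbalance_eq_0)

definition fires :: "nat \<Rightarrow> (nat \<times> nat) set \<Rightarrow> nat \<Rightarrow> nat \<Rightarrow> bool" where
  "fires N E t i \<longleftrightarrow> real (out_deg N E i) * stepsize t \<le> b N E t i"

lemma nflag_eq_of_bool: "nflag N E t i = of_bool (fires N E t i)"
  by (simp add: nflag_def flag_def fires_def b_def)

lemma fires_imp_b_nonneg: "fires N E t i \<Longrightarrow> 0 \<le> b N E t i"
  unfolding fires_def using stepsize_pos[of t]
  by (meson mult_nonneg_nonneg of_nat_0_le_iff order.trans less_imp_le)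

lemma decreasing_event_iff:
  "decreasing_event N E t \<longleftrightarrow>
    (\<exists>i\<in>nodes N. \<exists>j\<in>out_nbrs N E i. fires N E t i \<and> b N E t j < 0)"
  by (simp add: decreasing_event_def nflag_eq_of_bool)

lemma b_Suc:
  assumes "i \<in> nodes N"
  shows "b N E (Suc t) i = b N E t i + stepsize t *
    ((\<Sum>j\<in>in_nbrs N E i. of_bool (fires N E t j)) - real (out_deg N E i) * of_bool (fires N E t i))"
proof -
  let ?a = "weights N E t" and ?g = "stepsize t"
  have "(\<Sum>j\<in>in_nbrs N E i. weights N E (Suc t) i j)
      = (\<Sum>j\<in>in_nbrs N E i. ?a i j + of_bool (fires N E t j) * ?g)"
    by (rule sum.cong) (auto simp: Let_def nflag_def[symmetric] nflag_eq_of_bool)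
  moreover have "(\<Sum>j\<in>out_nbrs N E i. weights N E (Suc t) j i)
      = (\<Sum>j\<in>out_nbrs N E i. ?a j i + of_bool (fires N E t i) * ?g)"
  proof (rule sum.cong)
    fix j assume "j \<in> out_nbrs N E i"
    then have "i \<in> in_nbrs N E j" using assms unfolding out_nbrs_def in_nbrs_def by auto
    then show "weights N E (Suc t) j i = ?a j i + of_bool (fires N E t i) * ?g"
      by (simp add: Let_def nflag_def[symmetric] nflag_eq_of_bool)
  qed simp
  ultimately show ?thesis
    unfolding b_def imbalance_def
    by (simp add: sum.distrib sum_distrib_left sum_distrib_right out_deg_def algebra_simps)
qed

lemma b_Suc_nonneg:
  assumes "i \<in> nodes N" "0 \<le> b N E t i"
  shows "0 \<le> b N E (Suc t) i"
proof -
  have "0 \<le> stepsize t * (\<Sum>j\<in>in_nbrs N E i. of_bool (fires N E t j))"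
    using stepsize_pos[of t] by (simp add: sum_nonneg)
  then show ?thesis
    unfolding b_Suc[OF assms(1)] using assms(2)
    by (cases "fires N E t i") (auto simp: fires_def algebra_simps)
qed

lemma b_Suc_eq_if_neg:
  assumes "i \<in> nodes N" "b N E t i < 0" "\<not> decreasing_event N E t"
  shows "b N E (Suc t) i = b N E t i"
proof -
  have "\<not> fires N E t j" if "j \<in> in_nbrs N E i" for j
    using that assms unfolding decreasing_event_iff in_nbrs_def out_nbrs_def by auto
  moreover have "\<not> fires N E t i"
    using assms(2) fires_imp_b_nonneg by fastforce
  ultimately show ?thesis by (simp add: b_Suc[OF assms(1)])
qed

lemma b_nonneg_persists:
  assumes "i \<in> nodes N" "0 \<le> b N E k i" "k \<le> t"
  shows "0 \<le> b N E t i"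
  using assms(3,2) by (induction t rule: dec_induct) (auto intro: b_Suc_nonneg[OF assms(1)])

lemma b_neg_persists:
  assumes "i \<in> nodes N" "b N E k i < 0" "k \<le> t"
    and "\<And>s. k \<le> s \<Longrightarrow> s < t \<Longrightarrow> \<not> decreasing_event N E s"
  shows "b N E t i = b N E k i"
  using assms(3)
proof (induction t rule: dec_induct)
  case (step s)
  then show ?case using b_Suc_eq_if_neg[OF assms(1)] assms(2,4) by simp
qed simp

lemma eps_norm1_eq_neg_part: "eps_norm1 N E t = - 2 * (\<Sum>i\<in>nodes N. min (b N E t i) 0)"
proof -
  have "eps_norm1 N E t = (\<Sum>i\<in>nodes N. b N E t i - 2 * min (b N E t i) 0)"
    unfolding eps_norm1_def by (rule sum.cong) auto
  then show ?thesis by (simp add: sum_subtractf sum_b_eq_0 sum_distrib_left sum_negf)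
qed

lemma eps_norm1_eq_pos_part: "eps_norm1 N E t = 2 * (\<Sum>i\<in>nodes N. max (b N E t i) 0)"
proof -
  have "eps_norm1 N E t = (\<Sum>i\<in>nodes N. 2 * max (b N E t i) 0 - b N E t i)"
    unfolding eps_norm1_def by (rule sum.cong) auto
  then show ?thesis by (simp add: sum_subtractf sum_b_eq_0 sum_distrib_left)
qed

lemma eps_norm1_persists:
  assumes "k \<le> t" "\<And>s. k \<le> s \<Longrightarrow> s < t \<Longrightarrow> \<not> decreasing_event N E s"
  shows "eps_norm1 N E t = eps_norm1 N E k"
proof -
  have "min (b N E t i) 0 = min (b N E k i) 0" if "i \<in> nodes N" for i
    using b_neg_persists[OF that _ assms] b_nonneg_persists[OF that _ assms(1)] by force
  then show ?thesis unfolding eps_norm1_eq_neg_part by simp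
qed

lemma ex_neg_b_if_eps_norm1_pos:
  assumes "0 < eps_norm1 N E t"
  shows "\<exists>i\<in>nodes N. b N E t i < 0"
proof (rule ccontr)
  assume "\<not> ?thesis"
  then have "(\<Sum>i\<in>nodes N. min (b N E t i) 0) = 0" by (intro sum.neutral) auto
  with assms show False unfolding eps_norm1_eq_neg_part by simp
qed

lemma out_deg_le:
  assumes "i \<in> nodes N" "(i, i) \<notin> E"
  shows "out_deg N E i \<le> N - 1"
proof -
  have "out_nbrs N E i \<subseteq> nodes N - {i}"
    using assms unfolding out_nbrs_def by auto
  then have "card (out_nbrs N E i) \<le> card (nodes N - {i})" by (intro card_mono) auto
  then show ?thesis using assms(1) by (simp add: out_deg_def)
qed

lemma eps_norm1_le_if_none_fires:
  assumes loopless: "\<forall>i\<in>nodes N. (i, i) \<notin> E" and silent: "\<forall>i\<in>nodes N. \<not> fires N E t i"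
  shows "eps_norm1 N E t \<le> 2 * real (N - 1) ^ 2 * stepsize t"
proof -
  define P where "P = {i \<in> nodes N. 0 < b N E t i}"
  have b_less: "b N E t i < real (N - 1) * stepsize t" if "i \<in> nodes N" for i
  proof -
    have "b N E t i < real (out_deg N E i) * stepsize t"
      using silent that by (simp add: fires_def not_le)
    also have "\<dots> \<le> real (N - 1) * stepsize t"
      using out_deg_le[OF that] loopless that stepsize_pos[of t]
      by (intro mult_right_mono) auto
    finally show ?thesis .
  qed
  \<comment> \<open>the imbalances sum to zero, so not all of them are positive\<close>
  have "card P \<le> N - 1"
  proof (cases "P = nodes N")
    case True
    then have "nodes N = {} \<or> 0 < (\<Sum>i\<in>nodes N. b N E t i)"
      unfolding P_def by (metis (mono_tags, lifting) finite_nodes mem_Collect_eq sum_pos)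
    then show ?thesis using True by (auto simp: sum_b_eq_0)
  next
    case False
    then have "card P < card (nodes N)"
      unfolding P_def by (intro psubset_card_mono) auto
    then show ?thesis by simp
  qed
  have "(\<Sum>i\<in>nodes N. max (b N E t i) 0) = (\<Sum>i\<in>P. b N E t i)"
    unfolding P_def by (simp add: sum.inter_filter) (rule sum.cong, auto)
  also have "\<dots> \<le> (\<Sum>i\<in>P. real (N - 1) * stepsize t)"
    using b_less by (intro sum_mono) (auto simp: P_def less_imp_le)
  also have "\<dots> \<le> real (N - 1) * (real (N - 1) * stepsize t)"
    using \<open>card P \<le> N - 1\<close> stepsize_pos[of t] by (simp add: mult_right_mono)
  finally show ?thesis unfolding eps_norm1_eq_pos_part by (simp add: power2_eq_square)
qed

lemma ex_fires_if_eps_norm1_large: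
  assumes "2 \<le> N" "\<forall>i\<in>nodes N. (i, i) \<notin> E"
    and large: "2 * real N * (real N - 1) * stepsize k \<le> eps_norm1 N E k"
    and "k \<le> t" "\<And>s. k \<le> s \<Longrightarrow> s < t \<Longrightarrow> \<not> decreasing_event N E s"
  shows "\<exists>i\<in>nodes N. fires N E t i"
proof (rule ccontr)
  assume "\<not> ?thesis"
  then have "eps_norm1 N E t \<le> 2 * real (N - 1) ^ 2 * stepsize t"
    using assms(2) eps_norm1_le_if_none_fires by blast
  also have "\<dots> < 2 * real N * (real N - 1) * stepsize t"
    using assms(1) stepsize_pos[of t] by (simp add: of_nat_diff power2_eq_square)
  also have "\<dots> \<le> 2 * real N * (real N - 1) * stepsize k"
    using assms(1,4) stepsize_antimono by (intro mult_left_mono) auto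
  finally show False using large eps_norm1_persists[OF assms(4,5)] by simp
qed

primrec reach_within :: "nat \<Rightarrow> (nat \<times> nat) set \<Rightarrow> nat set \<Rightarrow> nat \<Rightarrow> nat set" where
  "reach_within N E S 0 = S"
| "reach_within N E S (Suc m) =
    reach_within N E S m \<union> {i \<in> nodes N. \<exists>j\<in>reach_within N E S m. (i, j) \<in> E}"

lemma reach_within_subset_nodes: "S \<subseteq> nodes N \<Longrightarrow> reach_within N E S m \<subseteq> nodes N"
  by (induction m) auto

lemma subset_reach_within: "S \<subseteq> reach_within N E S m"
  by (induction m) auto

lemma reach_within_stable_imp_eq_nodes:
  assumes sc: "strongly_connected N E" and "S \<noteq> {}" "S \<subseteq> nodes N"
    and stable: "reach_within N E S (Suc m) = reach_within N E S m"
  shows "reach_within N E S m = nodes N"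
proof -
  have closed: "x \<in> reach_within N E S m" if "(x, y) \<in> E\<^sup>*" "y \<in> reach_within N E S m" for x y
    using that
  proof (induction rule: converse_rtrancl_induct)
    case (step x z)
    then have "x \<in> reach_within N E S (Suc m)"
      using sc unfolding strongly_connected_def by auto
    then show ?case by (simp only: stable)
  qed
  obtain s where "s \<in> S" using assms(2) by auto
  then have "nodes N \<subseteq> reach_within N E S m"
    using sc assms(3) subset_reach_within closed unfolding strongly_connected_def by blast
  then show ?thesis using reach_within_subset_nodes[OF assms(3)] by blast
qed

lemma reach_within_eq_nodes:
  assumes sc: "strongly_connected N E" and "S \<noteq> {}" "S \<subseteq> nodes N"
  shows "reach_within N E S (N - 1) = nodes N"
proof -
  have grow: "reach_within N E S m = nodes N \<or> m < card (reach_within N E S m)" for m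
  proof (induction m)
    case 0
    then show ?case using assms(2,3) by (simp add: card_gt_0_iff finite_subset)
  next
    case (Suc m)
    show ?case
    proof (cases "reach_within N E S m = nodes N")
      case True
      then show ?thesis using reach_within_subset_nodes[OF assms(3)] by auto
    next
      case False
      then have "reach_within N E S m \<subset> reach_within N E S (Suc m)"
        using reach_within_stable_imp_eq_nodes[OF assms] by auto
      then have "card (reach_within N E S m) < card (reach_within N E S (Suc m))"
        using reach_within_subset_nodes[OF assms(3)] by (meson finite_nodes finite_subset psubset_card_mono)
      then show ?thesis using Suc False by simp
    qed
  qed
  have "card (reach_within N E S (N - 1)) \<le> card (nodes N)"
    using card_mono[OF finite_nodes reach_within_subset_nodes[OF assms(3)]] .
  moreover have "N \<noteq> 0" using assms(2,3) by (auto simp: nodes_def)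
  ultimately show ?thesis
    using grow[of "N - 1"] card_subset_eq[OF finite_nodes reach_within_subset_nodes[OF assms(3)]]
    by force
qed

definition firings :: "nat \<Rightarrow> (nat \<times> nat) set \<Rightarrow> nat \<Rightarrow> nat \<Rightarrow> nat \<Rightarrow> nat" where
  "firings N E a t i = (\<Sum>s\<in>{a..<t}. of_bool (fires N E s i))"

lemma firings_Suc:
  "a \<le> t \<Longrightarrow> firings N E a (Suc t) i = firings N E a t i + of_bool (fires N E t i)"
  by (simp add: firings_def)

lemma b_eq_firings:
  assumes "j \<in> nodes N" "a \<le> t" "\<And>s. a \<le> s \<Longrightarrow> s < t \<Longrightarrow> stepsize s = g"
  shows "b N E t j = b N E a j + g * ((\<Sum>i\<in>in_nbrs N E j. real (firings N E a t i))
    - real (out_deg N E j) * real (firings N E a t j))"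
  using assms(2,3)
proof (induction t rule: dec_induct)
  case base
  then show ?case by (simp add: firings_def)
next
  case (step s)
  then show ?case
    by (simp add: b_Suc[OF assms(1)] firings_Suc sum.distrib algebra_simps)
qed

lemma firings_in_nbr_less_if_not_fires:
  assumes "j \<in> nodes N" "i \<in> in_nbrs N E j" "0 \<le> b N E a j" "\<not> fires N E t j"
    and "a \<le> t" "\<And>s. a \<le> s \<Longrightarrow> s \<le> t \<Longrightarrow> stepsize s = g"
  shows "firings N E a t i < out_deg N E j * (firings N E a t j + 1)"
proof -
  have "b N E t j = b N E a j + g * ((\<Sum>i\<in>in_nbrs N E j. real (firings N E a t i))
      - real (out_deg N E j) * real (firings N E a t j))"
    using assms(1,5,6) by (intro b_eq_firings) auto
  moreover have "b N E t j < real (out_deg N E j) * g"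
    using assms(4,5,6) by (simp add: fires_def not_le)
  ultimately have "g * (\<Sum>i\<in>in_nbrs N E j. real (firings N E a t i))
      < g * (real (out_deg N E j) * (real (firings N E a t j) + 1))"
    using assms(3) by (simp add: algebra_simps)
  moreover have "0 < g" using assms(5,6) stepsize_pos[of a] by simp
  ultimately have "(\<Sum>i\<in>in_nbrs N E j. real (firings N E a t i))
      < real (out_deg N E j) * (real (firings N E a t j) + 1)"
    by simp
  moreover have "real (firings N E a t i) \<le> (\<Sum>i\<in>in_nbrs N E j. real (firings N E a t i))"
    using assms(2) by (intro member_le_sum) (auto simp: in_nbrs_def)
  ultimately have "real (firings N E a t i) < real (out_deg N E j * (firings N E a t j + 1))"
    by (simp add: algebra_simps)
  then show ?thesis by (simp only: of_nat_less_iff)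
qed

lemma firings_le_firings_out_nbr:
  assumes loopless: "\<forall>v\<in>nodes N. (v, v) \<notin> E"
    and "(i, j) \<in> E" "i \<in> nodes N" "j \<in> nodes N" "0 \<le> b N E a j"
    and "a \<le> t" "\<And>s. a \<le> s \<Longrightarrow> s < t \<Longrightarrow> stepsize s = g"
  shows "firings N E a t i \<le> (N - 1) * (firings N E a t j + 1)"
  using assms(6,7)
proof (induction t rule: dec_induct)
  case base
  then show ?case by (simp add: firings_def)
next
  case (step s)
  have "i \<noteq> j" using loopless assms(2,3) by auto
  then have "card {i, j} \<le> card (nodes N)" using assms(3,4) by (intro card_mono) auto
  then have N: "1 \<le> N - 1" using \<open>i \<noteq> j\<close> by simp
  have IH: "firings N E a s i \<le> (N - 1) * (firings N E a s j + 1)"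
    using step by simp
  have fi: "firings N E a (Suc s) i \<le> firings N E a s i + 1"
    using step.hyps by (simp add: firings_Suc)
  show ?case
  proof (cases "fires N E s j")
    case True
    have "firings N E a (Suc s) i \<le> (N - 1) * (firings N E a s j + 1) + (N - 1)"
      using fi IH N by linarith
    then show ?thesis using True step.hyps by (simp add: firings_Suc algebra_simps)
  next
    case False
    have "i \<in> in_nbrs N E j" using assms(2,3) by (simp add: in_nbrs_def)
    then have "firings N E a s i < out_deg N E j * (firings N E a s j + 1)"
      using False step assms(4,5) by (intro firings_in_nbr_less_if_not_fires) auto
    also have "\<dots> \<le> (N - 1) * (firings N E a s j + 1)"
      using out_deg_le[OF assms(4)] loopless assms(4) by (intro mult_right_mono) auto
    finally show ?thesis using fi False step.hyps by (simp add: firings_Suc)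
  qed
qed

lemma sum_firings_ge:
  assumes "\<And>s. a \<le> s \<Longrightarrow> s < t \<Longrightarrow> \<exists>i\<in>nodes N. fires N E s i"
  shows "t - a \<le> (\<Sum>i\<in>nodes N. firings N E a t i)"
proof -
  have "t - a = (\<Sum>s\<in>{a..<t}. 1::nat)" by simp
  also have "\<dots> \<le> (\<Sum>s\<in>{a..<t}. \<Sum>i\<in>nodes N. of_bool (fires N E s i))"
  proof (rule sum_mono)
    fix s assume "s \<in> {a..<t}"
    then obtain i where "i \<in> nodes N" "fires N E s i" using assms by auto
    then show "1 \<le> (\<Sum>i\<in>nodes N. of_bool (fires N E s i) :: nat)"
      using member_le_sum[of i "nodes N" "\<lambda>i. of_bool (fires N E s i) :: nat"] by simp
  qed
  also have "\<dots> = (\<Sum>i\<in>nodes N. firings N E a t i)"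
    unfolding firings_def by (rule sum.swap)
  finally show ?thesis .
qed

context
  fixes N :: nat and E :: "(nat \<times> nat) set" and k a t :: nat and g :: real
  assumes sc: "strongly_connected N E"
    and quiet: "\<And>s. k \<le> s \<Longrightarrow> s < t \<Longrightarrow> \<not> decreasing_event N E s"
    and window: "k \<le> a" "a \<le> t"
    and constant_step: "\<And>s. a \<le> s \<Longrightarrow> s < t \<Longrightarrow> stepsize s = g"
begin

lemma firings_eq_0_if_near_neg:
  assumes i: "i \<in> nodes N" and near: "b N E k i < 0 \<or> (\<exists>j\<in>out_nbrs N E i. b N E k j < 0)"
  shows "firings N E a t i = 0"
proof -
  have "\<not> fires N E s i" if s: "a \<le> s" "s < t" for s
  proof
    assume fires: "fires N E s i"
    have persists: "b N E s v < 0" if "v \<in> nodes N" "b N E k v < 0" for v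
    proof -
      have "b N E s v = b N E k v"
        by (rule b_neg_persists[OF that]) (use quiet window s in auto)
      with that show ?thesis by simp
    qed
    from near show False
    proof
      assume "b N E k i < 0"
      then show False using persists[OF i] fires_imp_b_nonneg[OF fires] by simp
    next
      assume "\<exists>j\<in>out_nbrs N E i. b N E k j < 0"
      then obtain j where j: "j \<in> out_nbrs N E i" "b N E k j < 0" by blast
      then have "b N E s j < 0" by (intro persists) (auto simp: out_nbrs_def)
      with j have "decreasing_event N E s" using i fires unfolding decreasing_event_iff by blast
      then show False using quiet window s by simp
    qed
  qed
  then show ?thesis by (simp add: firings_def)
qed

lemma firings_bound_on_reach_within:
  "i \<in> reach_within N E {j \<in> nodes N. b N E k j < 0} m \<Longrightarrow> firings N E a t i + 1 \<le> N ^ m"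
proof (induction m arbitrary: i)
  case 0
  then have "firings N E a t i = 0" by (intro firings_eq_0_if_near_neg) auto
  then show ?case by simp
next
  case (Suc m)
  let ?R = "reach_within N E {j \<in> nodes N. b N E k j < 0}"
  have R_nodes: "?R n \<subseteq> nodes N" for n by (rule reach_within_subset_nodes) auto
  have i: "i \<in> nodes N" using Suc.prems R_nodes by blast
  then have "1 \<le> N" by (simp add: nodes_def)
  show ?case
  proof (cases "i \<in> ?R m")
    case True
    have "N ^ m \<le> N ^ Suc m" using \<open>1 \<le> N\<close> by (intro power_increasing) auto
    then show ?thesis using Suc.IH[OF True] by linarith
  next
    case False
    then obtain j where j: "j \<in> ?R m" "(i, j) \<in> E" using Suc.prems by auto
    then have j_node: "j \<in> nodes N" using R_nodes by blast
    show ?thesis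
    proof (cases "b N E k i < 0 \<or> b N E k j < 0")
      case True
      then have "firings N E a t i = 0"
        using j j_node i by (intro firings_eq_0_if_near_neg) (auto simp: out_nbrs_def)
      then show ?thesis using \<open>1 \<le> N\<close> by simp
    next
      case False
      then have "0 \<le> b N E a j" using b_nonneg_persists[OF j_node _ window(1)] by simp
      then have "firings N E a t i \<le> (N - 1) * (firings N E a t j + 1)"
        using sc j i j_node window constant_step unfolding strongly_connected_def
        by (intro firings_le_firings_out_nbr) auto
      also have "\<dots> \<le> (N - 1) * N ^ m" using Suc.IH[OF j(1)] by (intro mult_left_mono) auto
      finally have "firings N E a t i \<le> (N - 1) * N ^ m" .
      moreover have "N ^ Suc m = (N - 1) * N ^ m + N ^ m" using \<open>1 \<le> N\<close> by (cases N) simp_all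
      moreover have "1 \<le> N ^ m" using \<open>1 \<le> N\<close> by simp
      ultimately show ?thesis by linarith
    qed
  qed
qed

lemma sum_firings_less:
  assumes "\<exists>j\<in>nodes N. b N E k j < 0"
  shows "(\<Sum>i\<in>nodes N. firings N E a t i) < N ^ N"
proof -
  let ?Neg = "{j \<in> nodes N. b N E k j < 0}"
  have "N \<noteq> 0" using assms by (auto simp: nodes_def)
  have "(\<Sum>i\<in>nodes N. firings N E a t i) < (\<Sum>i\<in>nodes N. firings N E a t i + 1)"
    using \<open>N \<noteq> 0\<close> by (intro sum_strict_mono) (auto simp: nodes_def)
  also have "\<dots> \<le> (\<Sum>i\<in>nodes N. N ^ (N - 1))"
    using reach_within_eq_nodes[OF sc, of ?Neg] assms firings_bound_on_reach_within
    by (intro sum_mono) auto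
  also have "\<dots> = N ^ N" using \<open>N \<noteq> 0\<close> by (simp flip: power_Suc)
  finally show ?thesis .
qed

end

lemma three_mul_self_power_le:
  assumes "2 \<le> N"
  shows "3 * N ^ N \<le> N ^ (2 * N)"
proof -
  have "(2::nat) ^ 2 \<le> N ^ 2" by (rule power_mono) (use assms in auto)
  also have "\<dots> \<le> N ^ N" by (rule power_increasing) (use assms in auto)
  finally have "3 * N ^ N \<le> N ^ N * N ^ N" using mult_le_mono1[of 3 "N ^ N" "N ^ N"] by simp
  then show ?thesis by (simp add: mult_2 power_add)
qed

theorem proposition1:
  fixes N :: nat and E :: "(nat \<times> nat) set" and k :: nat
  assumes "N \<ge> 2"
    and "strongly_connected N E"
    and "eps_norm1 N E k \<ge> 2 * real N * (real N - 1) * stepsize k"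
  shows "\<exists>t::nat. k \<le> t \<and> t \<le> k + N ^ (2 * N) \<and> decreasing_event N E t"
proof (rule ccontr)
  assume "\<not> ?thesis"
  then have quiet: "\<not> decreasing_event N E s" if "k \<le> s" "s < k + N ^ (2 * N)" for s
    using that by auto
  from assms(1) have "3 * N ^ N \<le> N ^ (2 * N)" by (rule three_mul_self_power_le)
  then obtain a where a: "k \<le> a" "a + N ^ N \<le> k + N ^ (2 * N)"
    and constant_step: "\<And>s. a \<le> s \<Longrightarrow> s < a + N ^ N \<Longrightarrow> stepsize s = stepsize a"
    by (rule stepsize_constant_subinterval[where k = k]) auto
  have quiet_window: "\<not> decreasing_event N E s" if "k \<le> s" "s < a + N ^ N" for s
    using quiet that a by simp
  have loopless: "\<forall>i\<in>nodes N. (i, i) \<notin> E"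
    using assms(2) unfolding strongly_connected_def by blast
  have "\<exists>i\<in>nodes N. fires N E s i" if "a \<le> s" "s < a + N ^ N" for s
    using ex_fires_if_eps_norm1_large[OF assms(1) loopless assms(3)] quiet_window that a(1)
    by simp
  then have "N ^ N \<le> (\<Sum>i\<in>nodes N. firings N E a (a + N ^ N) i)"
    using sum_firings_ge[of a "a + N ^ N" N E] by simp
  moreover have "(\<Sum>i\<in>nodes N. firings N E a (a + N ^ N) i) < N ^ N"
  proof (rule sum_firings_less[OF assms(2) quiet_window a(1) le_add1 constant_step])
    have "0 < 2 * real N * (real N - 1) * stepsize k" using assms(1) stepsize_pos[of k] by simp
    then show "\<exists>j\<in>nodes N. b N E k j < 0"
      using assms(3) by (intro ex_neg_b_if_eps_norm1_pos) linarith
  qed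
  ultimately show False by simp
qed

end
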